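(* Let $\beta,\kappa\ge0$ and let $\gamma$ be a simple loop in $E_N$ with $\partial\hat\partial\gamma\subseteq E_N$. For each $e\in\gamma_1$ fix a plaquette $p_e\in\hat\partial e$. Then $$\mathbb E_{N,\beta,\kappa}\Bigl[\rho\Bigl(\sum_{e\in\gamma_1\setminus\gamma'}(d\sigma)_{p_e}\Bigr)\Bigr]=\mathbb E_{N,\beta,\kappa}\Bigl[\prod_{e\in\gamma_1\setminus\gamma'}\theta_{\beta,\kappa}\bigl(\sigma_e-(d\sigma)_{p_e}\bigr)\Bigr].$$
   Context: $G=\mathbb Z_n$, $\rho$ faithful unitary one-dimensional. On $\mathbb Z^4$: $E_N,P_N$ oriented edges/plaquettes with vertices in $B_N=[-N,N]^4\cap\mathbb Z^4$; $\partial p$ oriented boundary edges; $\hat\partial e=\{p:e\in\partial p\}$; $\partial\hat\partial\gamma=\bigcup_{e\in\gamma}\bigcup_{p\in\hat\partial e}\partial p$. $\Sigma_{E_N}$: $\sigma:E_N\to G$, $\sigma_{-e}=-\sigma_e$, $(d\sigma)_p=\sum_{e\in\partial p}\sigma_e$; $\mu_{N,\beta,\kappa}(\sigma)\propto\exp(\beta\sum_p\rho((d\sigma)_p)+\kappa\sum_e\rho(\sigma_e))$, expectation $\mathbb E_{N,\beta,\kappa}$. Simple loop: set $\gamma$ of oriented edges, $e\in\gamma\Rightarrow-e\notin\gamma$, orderable into an oriented loop. $\gamma_c$: edges of $\gamma$ sharing a plaquette with another edge of $\gamma\cup(-\gamma)$; $\gamma_1=\gamma\setminus\gamma_c$; $\gamma'=\gamma'(\sigma)$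 is the set of $e\in\gamma_1$ for which there are $p,p'\in\hat\partial e$ with $(d\sigma)_p\ne(d\sigma)_{p'}$. $\varphi_r(g)=e^{r(\mathrm{Re}\rho(g)-1)}$ and $\theta_{\beta,\kappa}(\hat g)=\frac{\sum_{g\in G}\rho(g)\varphi_\beta(g)^{12}\varphi_\kappa(g+\hat g)^2}{\sum_{g\in G}\varphi_\beta(g)^{12}\varphi_\kappa(g+\hat g)^2}$. *)

theory Defs
  imports "HOL-Analysis.Finite_Cartesian_Product"
begin

text \<open>Lattice Z^4. Points are int^4, directions are elements of the type 4.
  An oriented edge (v,i,True) goes from v to v + e_i; (v,i,False) is its reversal.
  An oriented plaquette (v,i,j) with i \<noteq> j is the unit square at v spanned by
  e_i, e_j, oriented from e_i towards e_j; (v,j,i) is its reversal.\<close>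

type_synonym pt = "int ^ 4"
type_synonym edge = "pt \<times> 4 \<times> bool"
type_synonym plaq = "pt \<times> 4 \<times> 4"

definition uvec :: "4 \<Rightarrow> pt" where
  "uvec i = (\<chi> k. if k = i then 1 else 0)"

definition box :: "nat \<Rightarrow> pt set" where
  "box N = {x. \<forall>k. \<bar>x $ k\<bar> \<le> int N}"

definition neg_edge :: "edge \<Rightarrow> edge" where
  "neg_edge e = (case e of (v, i, s) \<Rightarrow> (v, i, \<not> s))"

definition estart :: "edge \<Rightarrow> pt" where
  "estart e = (case e of (v, i, s) \<Rightarrow> if s then v else v + uvec i)"

definition eend :: "edge \<Rightarrow> pt" where
  "eend e = (case e of (v, i, s) \<Rightarrow> if s then v + uvec i else v)"

definition edges :: "nat \<Rightarrow> edge set" where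
  "edges N = {(v, i, s). v \<in> box N \<and> v + uvec i \<in> box N}"

definition plaqs_Z4 :: "plaq set" where
  "plaqs_Z4 = {(v, i, j). i \<noteq> j}"

definition plaqs :: "nat \<Rightarrow> plaq set" where
  "plaqs N = {(v, i, j). i \<noteq> j \<and> v \<in> box N \<and> v + uvec i \<in> box N
      \<and> v + uvec j \<in> box N \<and> v + uvec i + uvec j \<in> box N}"

definition bd :: "plaq \<Rightarrow> edge set" where
  "bd p = (case p of (v, i, j) \<Rightarrow>
     {(v, i, True), (v + uvec i, j, True), (v + uvec j, i, False), (v, j, False)})"

definition cobd :: "edge \<Rightarrow> plaq set" where
  "cobd e = {p \<in> plaqs_Z4. e \<in> bd p}"

definition bd_cobd :: "edge set \<Rightarrow> edge set" where
  "bd_cobd \<gamma> = (\<Union>e\<in>\<gamma>. \<Union>p\<in>cobd e. bd p)"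

definition simple_loop :: "edge set \<Rightarrow> bool" where
  "simple_loop \<gamma> \<longleftrightarrow> (\<forall>e\<in>\<gamma>. neg_edge e \<notin> \<gamma>) \<and>
     (\<exists>es. es \<noteq> [] \<and> distinct es \<and> set es = \<gamma> \<and>
        (\<forall>k < length es. eend (es ! k) = estart (es ! ((k + 1) mod length es))))"

definition gamma_c :: "edge set \<Rightarrow> edge set" where
  "gamma_c \<gamma> = {e \<in> \<gamma>. \<exists>p \<in> plaqs_Z4. \<exists>e'. e \<in> bd p \<and> e' \<in> bd p \<and>
      e' \<in> \<gamma> \<union> neg_edge ` \<gamma> \<and> e' \<noteq> e \<and> e' \<noteq> neg_edge e}"

definition gamma1 :: "edge set \<Rightarrow> edge set" where
  "gamma1 \<gamma> = \<gamma> - gamma_c \<gamma>"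

text \<open>Group G = Z_n, elements represented by integers; (d sigma)_p reduced mod n.\<close>
definition dsig :: "nat \<Rightarrow> (edge \<Rightarrow> int) \<Rightarrow> plaq \<Rightarrow> int" where
  "dsig n \<sigma> p = (\<Sum>e\<in>bd p. \<sigma> e) mod int n"

definition gamma' :: "nat \<Rightarrow> (edge \<Rightarrow> int) \<Rightarrow> edge set \<Rightarrow> edge set" where
  "gamma' n \<sigma> \<gamma> = {e \<in> gamma1 \<gamma>. \<exists>p \<in> cobd e. \<exists>p' \<in> cobd e. dsig n \<sigma> p \<noteq> dsig n \<sigma> p'}"

definition configs :: "nat \<Rightarrow> nat \<Rightarrow> (edge \<Rightarrow> int) set" where
  "configs n N = {\<sigma>. (\<forall>e\<in>edges N. \<sigma> e \<in> {0..<int n} \<and> \<sigma> (neg_edge e) = (- \<sigma> e) mod int n)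
                    \<and> (\<forall>e. e \<notin> edges N \<longrightarrow> \<sigma> e = 0)}"

definition faithful_rep :: "nat \<Rightarrow> (int \<Rightarrow> complex) \<Rightarrow> bool" where
  "faithful_rep n \<rho> \<longleftrightarrow> (\<forall>a b. \<rho> (a + b) = \<rho> a * \<rho> b) \<and> \<rho> (int n) = 1
      \<and> (\<forall>a. cmod (\<rho> a) = 1) \<and> (\<forall>a. \<rho> a = 1 \<longrightarrow> int n dvd a)"

definition weight :: "nat \<Rightarrow> (int \<Rightarrow> complex) \<Rightarrow> nat \<Rightarrow> real \<Rightarrow> real \<Rightarrow> (edge \<Rightarrow> int) \<Rightarrow> complex" where
  "weight n \<rho> N \<beta> \<kappa> \<sigma> = exp (of_real \<beta> * (\<Sum>p\<in>plaqs N. \<rho> (dsig n \<sigma> p))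
                              + of_real \<kappa> * (\<Sum>e\<in>edges N. \<rho> (\<sigma> e)))"

definition expect :: "nat \<Rightarrow> (int \<Rightarrow> complex) \<Rightarrow> nat \<Rightarrow> real \<Rightarrow> real \<Rightarrow> ((edge \<Rightarrow> int) \<Rightarrow> complex) \<Rightarrow> complex" where
  "expect n \<rho> N \<beta> \<kappa> f = (\<Sum>\<sigma>\<in>configs n N. f \<sigma> * weight n \<rho> N \<beta> \<kappa> \<sigma>)
                          / (\<Sum>\<sigma>\<in>configs n N. weight n \<rho> N \<beta> \<kappa> \<sigma>)"

definition phi :: "(int \<Rightarrow> complex) \<Rightarrow> real \<Rightarrow> int \<Rightarrow> real" where
  "phi \<rho> r g = exp (r * (Re (\<rho> g) - 1))"

definition theta :: "nat \<Rightarrow> (int \<Rightarrow> complex) \<Rightarrow> real \<Rightarrow> real \<Rightarrow> int \<Rightarrow> complex" where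
  "theta n \<rho> \<beta> \<kappa> h =
     (\<Sum>g\<in>{0..<int n}. \<rho> g * of_real (phi \<rho> \<beta> g ^ 12 * phi \<rho> \<kappa> (g + h) ^ 2))
     / of_real (\<Sum>g\<in>{0..<int n}. phi \<rho> \<beta> g ^ 12 * phi \<rho> \<kappa> (g + h) ^ 2)"

end

(* For e in gamma1 no plaquette containing e or -e contains another edge of gamma or -gamma,
   and these plaquette sets are disjoint for distinct edges of gamma1. Hence adding t_e in Z_n
   to sigma_e (and -t_e to sigma_-e) for all e in gamma1 is a bijection of the configurations
   that adds t_e to (d sigma)_p on the six plaquettes p containing e, changes no other plaquette
   variable, preserves gamma', and multiplies the Gibbs weight by one factor per edge of gamma1.
   Averaging both expectations over all such shifts t therefore factorizes over the edges.
   At an edge of gamma1 - gamma' the six plaquette variables share a value b, the factor is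
   proportional to exp (12 beta Re rho (b + t) + 2 kappa Re rho (sigma_e + t)), and summing
   rho (b + t) against it over t in Z_n gives theta (sigma_e - b) times the sum of the factor. *)

theory Submission
  imports Defs "HOL-Library.FuncSet"
begin

context
  fixes n :: nat and \<rho> :: "int \<Rightarrow> complex"
  assumes rep: "faithful_rep n \<rho>"
begin

lemma faithful_rep_add: "\<rho> (a + b) = \<rho> a * \<rho> b"
  using rep unfolding faithful_rep_def by blast

lemma faithful_rep_nonzero: "\<rho> a \<noteq> 0"
  using rep unfolding faithful_rep_def by (metis norm_zero zero_neq_one)

lemma faithful_rep_zero: "\<rho> 0 = 1"
  using faithful_rep_add[of 0 0] faithful_rep_nonzero[of 0] by simp

lemma faithful_rep_uminus: "\<rho> (- a) = cnj (\<rho> a)"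
proof -
  have "\<rho> (- a) * \<rho> a = 1"
    using faithful_rep_add[of "- a" a] faithful_rep_zero by simp
  moreover have "cnj (\<rho> a) * \<rho> a = 1"
    using rep complex_norm_square[of "\<rho> a"] unfolding faithful_rep_def by (simp add: mult.commute)
  ultimately show ?thesis
    using faithful_rep_nonzero[of a] by (metis mult_cancel_right)
qed

lemma faithful_rep_add_uminus: "\<rho> a + \<rho> (- a) = of_real (2 * Re (\<rho> a))"
  by (simp add: faithful_rep_uminus complex_add_cnj)

lemma faithful_rep_mult_n: "\<rho> (int n * k) = 1"
proof -
  have nat_case: "\<rho> (int n * int m) = 1" for m
  proof (induction m)
    case 0
    then show ?case by (simp add: faithful_rep_zero)
  next
    case (Suc m)
    have "\<rho> (int n * int (Suc m)) = \<rho> (int n * int m) * \<rho> (int n)"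
      by (simp add: algebra_simps flip: faithful_rep_add)
    then show ?case using Suc rep by (simp add: faithful_rep_def)
  qed
  show ?thesis
  proof (cases "k \<ge> 0")
    case True
    then show ?thesis using nat_case[of "nat k"] by simp
  next
    case False
    then have "int n * k = - (int n * int (nat (- k)))" by simp
    then show ?thesis using nat_case[of "nat (- k)"] by (simp add: faithful_rep_uminus)
  qed
qed

lemma faithful_rep_mod: "\<rho> (a mod int n) = \<rho> a"
  using faithful_rep_add[of "a mod int n" "int n * (a div int n)"] faithful_rep_mult_n
  by (simp add: mult.commute)

lemma faithful_rep_cong: "a mod int n = b mod int n \<Longrightarrow> \<rho> a = \<rho> b"
  by (metis faithful_rep_mod)

lemma faithful_rep_sum: "\<rho> (sum f A) = (\<Prod>x\<in>A. \<rho> (f x))"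
proof (cases "finite A")
  case True
  then show ?thesis
    by (induction A rule: finite_induct) (auto simp: faithful_rep_zero faithful_rep_add)
qed (simp add: faithful_rep_zero)

end

definition rev_plaq :: "plaq \<Rightarrow> plaq" where
  "rev_plaq p = (case p of (v, i, j) \<Rightarrow> (v, j, i))"

lemma rev_plaq_rev_plaq [simp]: "rev_plaq (rev_plaq p) = p"
  by (cases p) (auto simp: rev_plaq_def)

lemma inj_rev_plaq: "inj rev_plaq"
  by (metis injI rev_plaq_rev_plaq)

lemma neg_edge_neg_edge [simp]: "neg_edge (neg_edge e) = e"
  by (cases e) (auto simp: neg_edge_def)

lemma inj_neg_edge: "inj neg_edge"
  by (metis injI neg_edge_neg_edge)

lemma neg_edge_Pair [simp]: "neg_edge (v, i, s) = (v, i, \<not> s)"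
  by (simp add: neg_edge_def)

lemma uvec_nonzero: "uvec i \<noteq> 0"
proof
  assume "uvec i = 0"
  then have "uvec i $ i = 0" by simp
  then show False by (simp add: uvec_def)
qed

lemma add_uvec_neq [simp]: "v + uvec i \<noteq> v" "v \<noteq> v + uvec i"
  using uvec_nonzero by (metis add_cancel_left_right)+

lemma bd_rev_plaq: "bd (rev_plaq p) = neg_edge ` bd p"
  by (cases p) (auto simp: rev_plaq_def bd_def)

lemma rev_plaq_in_plaqs_Z4_iff: "rev_plaq p \<in> plaqs_Z4 \<longleftrightarrow> p \<in> plaqs_Z4"
  by (cases p) (auto simp: rev_plaq_def plaqs_Z4_def)

lemma rev_plaq_in_plaqs_iff: "rev_plaq p \<in> plaqs N \<longleftrightarrow> p \<in> plaqs N"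
  by (cases p) (auto simp: rev_plaq_def plaqs_def add.commute add.left_commute)

lemma finite_bd: "finite (bd p)"
  by (cases p) (simp add: bd_def)

lemma neg_edge_notin_bd:
  assumes "p \<in> plaqs_Z4" "e \<in> bd p"
  shows "neg_edge e \<notin> bd p"
proof -
  obtain v i j where p: "p = (v, i, j)" by (cases p)
  with assms have "i \<noteq> j" by (simp add: plaqs_Z4_def)
  moreover have "v + uvec i + uvec j \<noteq> v + uvec j"
    by (metis add.commute add_uvec_neq(1) add.assoc)
  ultimately show ?thesis
    using assms p uvec_nonzero[of j] by (auto simp: bd_def add.commute)
qed

lemma neg_edge_in_edges: "e \<in> edges N \<Longrightarrow> neg_edge e \<in> edges N"
  by (cases e) (auto simp: edges_def)

lemma plaqs_subset_plaqs_Z4: "plaqs N \<subseteq> plaqs_Z4"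
  by (auto simp: plaqs_def plaqs_Z4_def)

lemma bd_subset_edges: "p \<in> plaqs N \<Longrightarrow> bd p \<subseteq> edges N"
  by (cases p) (auto simp: plaqs_def bd_def edges_def add.commute add.left_commute)

lemma in_plaqs_if_bd_subset_edges:
  assumes "p \<in> plaqs_Z4" "bd p \<subseteq> edges N"
  shows "p \<in> plaqs N"
  using assms by (cases p) (auto simp: bd_def edges_def plaqs_def plaqs_Z4_def)

lemma finite_box: "finite (box N)"
proof -
  have "box N \<subseteq> (\<lambda>f. \<chi> k. f k) ` (UNIV \<rightarrow>\<^sub>E {- int N .. int N})"
  proof
    fix x assume "x \<in> box N"
    then have "(\<lambda>k. x $ k) \<in> UNIV \<rightarrow>\<^sub>E {- int N .. int N}"
      by (auto simp: box_def abs_le_iff minus_le_iff)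
    then show "x \<in> (\<lambda>f. \<chi> k. f k) ` (UNIV \<rightarrow>\<^sub>E {- int N .. int N})" by force
  qed
  then show ?thesis
    by (rule finite_subset) (intro finite_imageI finite_PiE, auto)
qed

lemma finite_edges: "finite (edges N)"
  by (rule finite_subset[of _ "box N \<times> UNIV"]) (auto simp: edges_def finite_box)

lemma finite_plaqs: "finite (plaqs N)"
  by (rule finite_subset[of _ "box N \<times> UNIV"]) (auto simp: plaqs_def finite_box)

lemma cobd_neg_edge: "cobd (neg_edge e) = rev_plaq ` cobd e"
proof -
  have mem: "p \<in> cobd (neg_edge e) \<longleftrightarrow> rev_plaq p \<in> cobd e" for p
    using bd_rev_plaq[of p] rev_plaq_in_plaqs_Z4_iff[of p] inj_neg_edge
    by (auto simp: cobd_def inj_image_mem_iff) (metis image_eqI neg_edge_neg_edge)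
  show ?thesis
  proof (rule set_eqI)
    fix p
    show "p \<in> cobd (neg_edge e) \<longleftrightarrow> p \<in> rev_plaq ` cobd e"
      using mem[of p] mem[of "rev_plaq p"] by (auto intro: image_eqI[where x = "rev_plaq p"])
  qed
qed

lemma cobd_forward_edge:
  "cobd (v, i, True) = (\<lambda>j. (v, i, j)) ` (UNIV - {i}) \<union> (\<lambda>j. (v - uvec j, j, i)) ` (UNIV - {i})"
  unfolding cobd_def plaqs_Z4_def bd_def by (auto simp: image_iff)

lemma card_cobd: "card (cobd e) = 6"
proof -
  have card_forward: "card (cobd (v, i, True)) = 6" for v i
  proof -
    have "card (UNIV - {i :: 4}) = 3" by (simp add: card_Diff_singleton)
    moreover have "inj_on (\<lambda>j. (v, i, j)) (UNIV - {i})"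
      and "inj_on (\<lambda>j. (v - uvec j, j, i)) (UNIV - {i})"
      by (auto intro: inj_onI)
    moreover have "(\<lambda>j. (v, i, j)) ` (UNIV - {i}) \<inter> (\<lambda>j. (v - uvec j, j, i)) ` (UNIV - {i}) = {}"
      by auto
    ultimately show ?thesis
      unfolding cobd_forward_edge by (subst card_Un_disjoint) (auto simp: card_image)
  qed
  obtain v i s where e: "e = (v, i, s)" by (cases e)
  show ?thesis
  proof (cases s)
    case False
    then have "cobd e = rev_plaq ` cobd (v, i, True)"
      using e cobd_neg_edge[of "(v, i, True)"] by simp
    then show ?thesis
      using card_forward by (simp add: card_image inj_on_subset[OF inj_rev_plaq])
  qed (use e card_forward in simp)
qed

lemma cobd_disjoint_cobd_neg_edge: "cobd e \<inter> cobd (neg_edge e) = {}"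
  using neg_edge_notin_bd unfolding cobd_def by blast

lemma finite_cobd: "finite (cobd e)"
  using card_cobd[of e] by (metis card.infinite zero_neq_numeral)

lemma sum_split_disjoint_family:
  assumes "finite A" "finite I" "\<And>i. i \<in> I \<Longrightarrow> B i \<subseteq> A"
    and "\<And>i j. i \<in> I \<Longrightarrow> j \<in> I \<Longrightarrow> i \<noteq> j \<Longrightarrow> B i \<inter> B j = {}"
  shows "sum f A = sum f (A - (\<Union>i\<in>I. B i)) + (\<Sum>i\<in>I. sum f (B i))"
proof -
  have "sum f A = sum f (A - (\<Union>i\<in>I. B i)) + sum f (\<Union>i\<in>I. B i)"
    using assms(1,3) by (intro sum.subset_diff) auto
  also have "sum f (\<Union>i\<in>I. B i) = (\<Sum>i\<in>I. sum f (B i))"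
    using assms by (intro sum.UNION_disjoint) (auto intro: finite_subset)
  finally show ?thesis .
qed

lemma sum_mod_shift:
  fixes m b :: int
  assumes "0 < m" and "\<And>x. H (x mod m) = H x"
  shows "(\<Sum>g\<in>{0..<m}. H (b + g)) = (\<Sum>g\<in>{0..<m}. H g)"
proof (rule sum.reindex_bij_witness[where j = "\<lambda>g. (b + g) mod m" and i = "\<lambda>g. (g - b) mod m"])
  fix g assume "g \<in> {0..<m}"
  then show "((b + g) mod m - b) mod m = g" and "(b + g) mod m \<in> {0..<m}"
      and "(b + (g - b) mod m) mod m = g" and "(g - b) mod m \<in> {0..<m}"
    using assms(1) by (simp_all add: mod_diff_left_eq mod_add_right_eq)
  show "H ((b + g) mod m) = H (b + g)" by (rule assms(2))
qed

lemma sum_eq_by_averaging: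
  fixes f g :: "'a \<Rightarrow> 'b :: field_char_0"
  assumes "finite T" "T \<noteq> {}" and "\<And>t. t \<in> T \<Longrightarrow> bij_betw (\<phi> t) X X"
    and "\<And>x. x \<in> X \<Longrightarrow> (\<Sum>t\<in>T. f (\<phi> t x)) = (\<Sum>t\<in>T. g (\<phi> t x))"
  shows "sum f X = sum g X"
proof -
  have average: "of_nat (card T) * sum h X = (\<Sum>x\<in>X. \<Sum>t\<in>T. h (\<phi> t x))"
    for h :: "'a \<Rightarrow> 'b"
  proof -
    have "of_nat (card T) * sum h X = (\<Sum>t\<in>T. \<Sum>x\<in>X. h (\<phi> t x))"
      using sum.reindex_bij_betw[OF assms(3), of _ h] by simp
    also have "\<dots> = (\<Sum>x\<in>X. \<Sum>t\<in>T. h (\<phi> t x))"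
      by (rule sum.swap)
    finally show ?thesis .
  qed
  have "of_nat (card T) * sum f X = of_nat (card T) * sum g X"
    unfolding average using assms(4) by simp
  moreover have "card T \<noteq> 0"
    using assms(1,2) by simp
  ultimately show ?thesis by simp
qed

lemma sum_PiE_mult_prod:
  fixes f w :: "'a \<Rightarrow> 'c \<Rightarrow> 'b :: comm_semiring_1"
  assumes "finite S" and "\<And>e. e \<in> S \<Longrightarrow> finite (G e)"
  shows "(\<Sum>t\<in>PiE S G. (\<Prod>e\<in>S. f e (t e)) * (c * (\<Prod>e\<in>S. w e (t e))))
       = c * (\<Prod>e\<in>S. \<Sum>g\<in>G e. f e g * w e g)"
  using prod_sum_PiE[OF assms, where f = "\<lambda>e g. f e g * w e g"]
  by (simp add: sum_distrib_left prod.distrib mult_ac)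

definition theta_weight :: "(int \<Rightarrow> complex) \<Rightarrow> real \<Rightarrow> real \<Rightarrow> int \<Rightarrow> int \<Rightarrow> real" where
  "theta_weight \<rho> \<beta> \<kappa> h g = exp (12 * \<beta> * Re (\<rho> g) + 2 * \<kappa> * Re (\<rho> (g + h)))"

lemma theta_mult_sum_theta_weight:
  assumes "0 < n"
  shows "theta n \<rho> \<beta> \<kappa> h * of_real (\<Sum>g\<in>{0..<int n}. theta_weight \<rho> \<beta> \<kappa> h g)
       = (\<Sum>g\<in>{0..<int n}. \<rho> g * of_real (theta_weight \<rho> \<beta> \<kappa> h g))"
proof -
  define c where "c = exp (- 12 * \<beta> - 2 * \<kappa>)"
  have phi_powers: "phi \<rho> \<beta> g ^ 12 * phi \<rho> \<kappa> (g + h) ^ 2 = c * theta_weight \<rho> \<beta> \<kappa> h g" for g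
    unfolding phi_def c_def theta_weight_def
    by (simp add: exp_of_nat_mult[symmetric] exp_add[symmetric] algebra_simps)
  define D where "D = (\<Sum>g\<in>{0..<int n}. theta_weight \<rho> \<beta> \<kappa> h g)"
  have "D > 0"
    unfolding D_def using assms by (intro sum_pos) (auto simp: theta_weight_def)
  moreover have "c > 0" by (simp add: c_def)
  moreover have "theta n \<rho> \<beta> \<kappa> h
      = (of_real c * (\<Sum>g\<in>{0..<int n}. \<rho> g * of_real (theta_weight \<rho> \<beta> \<kappa> h g))) / (of_real c * of_real D)"
    unfolding theta_def phi_powers D_def by (simp add: sum_distrib_left mult_ac)
  ultimately show ?thesis
    unfolding D_def[symmetric] by (simp add: field_simps del: of_real_sum)
qed

context
  fixes n :: nat and \<rho> :: "int \<Rightarrow> complex"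
  assumes rep: "faithful_rep n \<rho>"
begin

lemma theta_cong:
  assumes "x mod int n = y mod int n"
  shows "theta n \<rho> \<beta> \<kappa> x = theta n \<rho> \<beta> \<kappa> y"
proof -
  have "\<rho> (g + x) = \<rho> (g + y)" for g
    using assms by (metis faithful_rep_cong[OF rep] mod_add_right_eq)
  then show ?thesis
    unfolding theta_def phi_def by simp
qed

lemma theta_weight_mod: "theta_weight \<rho> \<beta> \<kappa> h (x mod int n) = theta_weight \<rho> \<beta> \<kappa> h x"
  unfolding theta_weight_def
  by (metis faithful_rep_cong[OF rep] faithful_rep_mod[OF rep] mod_add_left_eq)

end

lemma configs_neg_edge: "\<sigma> \<in> configs n N \<Longrightarrow> x \<in> edges N \<Longrightarrow> \<sigma> (neg_edge x) = (- \<sigma> x) mod int n"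
  by (simp add: configs_def)

definition ucobd :: "edge \<Rightarrow> plaq set" where
  "ucobd e = cobd e \<union> cobd (neg_edge e)"

locale loop_in_box =
  fixes n N :: nat and \<rho> :: "int \<Rightarrow> complex" and \<gamma> :: "edge set"
  assumes n_pos: "0 < n" and rep: "faithful_rep n \<rho>"
    and finite_gamma: "finite \<gamma>"
    and neg_edge_notin_gamma: "e \<in> \<gamma> \<Longrightarrow> neg_edge e \<notin> \<gamma>"
    and gamma_subset_edges: "\<gamma> \<subseteq> edges N"
    and bd_cobd_subset_edges: "bd_cobd \<gamma> \<subseteq> edges N"
begin

abbreviation "S \<equiv> gamma1 \<gamma>"

lemma gamma1_subset_gamma: "S \<subseteq> \<gamma>"
  by (auto simp: gamma1_def)

lemma finite_gamma1: "finite S"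
  using finite_gamma gamma1_subset_gamma by (rule finite_subset[rotated])

lemma gamma1_subset_edges: "S \<subseteq> edges N"
  using gamma1_subset_gamma gamma_subset_edges by blast

lemma neg_edge_notin_gamma1: "e \<in> S \<Longrightarrow> neg_edge e \<notin> S"
  using gamma1_subset_gamma neg_edge_notin_gamma by blast

lemma neg_edge_neq_gamma1: "e \<in> S \<Longrightarrow> neg_edge e \<noteq> e"
  using neg_edge_notin_gamma1 by metis

lemma gamma1_only_edge_in_cobd:
  assumes e: "e \<in> S" and p: "p \<in> cobd e" and x: "x \<in> bd p" and "x \<in> \<gamma> \<or> neg_edge x \<in> \<gamma>"
  shows "x = e"
proof (rule ccontr)
  assume "x \<noteq> e"
  moreover have "p \<in> plaqs_Z4" and "e \<in> bd p"
    using p by (auto simp: cobd_def)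
  moreover have "x \<noteq> neg_edge e"
    using neg_edge_notin_bd[OF \<open>p \<in> plaqs_Z4\<close> \<open>e \<in> bd p\<close>] x by blast
  moreover have "x \<in> \<gamma> \<union> neg_edge ` \<gamma>"
    using \<open>x \<in> \<gamma> \<or> neg_edge x \<in> \<gamma>\<close> by (metis UnI1 UnI2 image_eqI neg_edge_neg_edge)
  ultimately have "e \<in> gamma_c \<gamma>"
    using e x gamma1_subset_gamma unfolding gamma_c_def by blast
  with e show False by (simp add: gamma1_def)
qed

lemma gamma1_only_edges_in_ucobd:
  assumes e: "e \<in> S" and p: "p \<in> ucobd e" and x: "x \<in> bd p" and x_gamma: "x \<in> \<gamma> \<or> neg_edge x \<in> \<gamma>"
  shows "x = e \<or> x = neg_edge e"
proof (cases "p \<in> cobd e")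
  case True
  then show ?thesis using gamma1_only_edge_in_cobd[OF e _ x x_gamma] by blast
next
  case False
  then have "rev_plaq p \<in> cobd e"
    using p cobd_neg_edge[of e] by (auto simp: ucobd_def)
  moreover have "neg_edge x \<in> bd (rev_plaq p)"
    using x bd_rev_plaq by blast
  moreover have "neg_edge x \<in> \<gamma> \<or> neg_edge (neg_edge x) \<in> \<gamma>"
    using x_gamma by (simp only: neg_edge_neg_edge) blast
  ultimately have "neg_edge x = e"
    by (rule gamma1_only_edge_in_cobd[OF e])
  then show ?thesis by (metis neg_edge_neg_edge)
qed

lemma ucobd_disjoint:
  assumes "e1 \<in> S" "e2 \<in> S" "e1 \<noteq> e2"
  shows "ucobd e1 \<inter> ucobd e2 = {}"
proof (rule equals0I)
  fix p assume p: "p \<in> ucobd e1 \<inter> ucobd e2"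
  then have "e2 \<in> bd p \<or> neg_edge e2 \<in> bd p"
    unfolding ucobd_def cobd_def by blast
  then obtain x where x: "x \<in> bd p" "x = e2 \<or> x = neg_edge e2"
    by blast
  have "e2 \<in> \<gamma>" "e1 \<in> \<gamma>"
    using assms gamma1_subset_gamma by auto
  then have "x = e1 \<or> x = neg_edge e1"
    using gamma1_only_edges_in_ucobd[OF assms(1) _ x(1)] p x(2) by auto
  then show False
    using x(2) assms(3) \<open>e1 \<in> \<gamma>\<close> \<open>e2 \<in> \<gamma>\<close> neg_edge_notin_gamma by (metis neg_edge_neg_edge)
qed

lemma edge_pairs_disjoint:
  assumes "e1 \<in> S" "e2 \<in> S" "e1 \<noteq> e2"
  shows "{e1, neg_edge e1} \<inter> {e2, neg_edge e2} = {}"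
proof -
  have "e2 \<noteq> neg_edge e1" "e1 \<noteq> neg_edge e2" "neg_edge e1 \<noteq> neg_edge e2"
    using assms neg_edge_notin_gamma1 by (metis neg_edge_neg_edge)+
  then show ?thesis using assms(3) by auto
qed

lemma cobd_subset_plaqs: "e \<in> \<gamma> \<Longrightarrow> cobd e \<subseteq> plaqs N"
  using bd_cobd_subset_edges in_plaqs_if_bd_subset_edges
  unfolding bd_cobd_def cobd_def by blast

lemma ucobd_subset_plaqs: "e \<in> \<gamma> \<Longrightarrow> ucobd e \<subseteq> plaqs N"
  using cobd_subset_plaqs rev_plaq_in_plaqs_iff unfolding ucobd_def cobd_neg_edge by blast

definition shift :: "(edge \<Rightarrow> int) \<Rightarrow> (edge \<Rightarrow> int) \<Rightarrow> edge \<Rightarrow> int" where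
  "shift \<sigma> t x = (if x \<in> S then (\<sigma> x + t x) mod int n
      else if neg_edge x \<in> S then (- (\<sigma> (neg_edge x) + t (neg_edge x))) mod int n
      else \<sigma> x)"

lemma shift_gamma1: "x \<in> S \<Longrightarrow> shift \<sigma> t x = (\<sigma> x + t x) mod int n"
  by (simp add: shift_def)

lemma shift_neg_gamma1: "x \<in> S \<Longrightarrow> shift \<sigma> t (neg_edge x) = (- (\<sigma> x + t x)) mod int n"
  using neg_edge_notin_gamma1 by (simp add: shift_def)

lemma shift_other: "x \<notin> S \<Longrightarrow> neg_edge x \<notin> S \<Longrightarrow> shift \<sigma> t x = \<sigma> x"
  by (simp add: shift_def)

lemma shift_in_configs:
  assumes \<sigma>: "\<sigma> \<in> configs n N"
  shows "shift \<sigma> t \<in> configs n N"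
proof -
  have "shift \<sigma> t x \<in> {0..<int n} \<and> shift \<sigma> t (neg_edge x) = (- shift \<sigma> t x) mod int n"
    if x: "x \<in> edges N" for x
  proof (intro conjI)
    show "shift \<sigma> t x \<in> {0..<int n}"
      using \<sigma> x n_pos by (auto simp: shift_def configs_def)
    consider "x \<in> S" | "neg_edge x \<in> S" | "x \<notin> S" "neg_edge x \<notin> S" by blast
    then show "shift \<sigma> t (neg_edge x) = (- shift \<sigma> t x) mod int n"
    proof cases
      case 2
      then obtain y where "y \<in> S" "x = neg_edge y"
        by (metis neg_edge_neg_edge)
      then show ?thesis
        by (simp add: shift_gamma1 shift_neg_gamma1 mod_minus_eq add.commute)
    qed (use \<sigma> x in \<open>simp_all add: shift_gamma1 shift_neg_gamma1 shift_other mod_minus_eq configs_def\<close>)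
  qed
  moreover have "shift \<sigma> t x = 0" if "x \<notin> edges N" for x
  proof -
    have "x \<notin> S" "neg_edge x \<notin> S"
      using that gamma1_subset_edges neg_edge_in_edges by (metis neg_edge_neg_edge subsetD)+
    moreover have "\<sigma> x = 0"
      using \<sigma> that unfolding configs_def by blast
    ultimately show ?thesis by (simp add: shift_other)
  qed
  ultimately show ?thesis
    unfolding configs_def by blast
qed

lemma shift_shift_uminus:
  assumes \<sigma>: "\<sigma> \<in> configs n N"
  shows "shift (shift \<sigma> t) (\<lambda>e. - t e) = \<sigma>"
proof
  fix x
  consider "x \<in> S" | "neg_edge x \<in> S" | "x \<notin> S" "neg_edge x \<notin> S" by blast
  then show "shift (shift \<sigma> t) (\<lambda>e. - t e) x = \<sigma> x"
  proof cases
    case 1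
    then have "\<sigma> x \<in> {0..<int n}"
      using \<sigma> gamma1_subset_edges by (auto simp: configs_def)
    then show ?thesis using 1 by (simp add: shift_gamma1 mod_diff_left_eq)
  next
    case 2
    then obtain y where y: "y \<in> S" "x = neg_edge y"
      by (metis neg_edge_neg_edge)
    then have "\<sigma> x = (- \<sigma> y) mod int n"
      using \<sigma> gamma1_subset_edges by (auto simp: configs_def)
    moreover have "(- ((\<sigma> y + t y) mod int n - t y)) mod int n = (- \<sigma> y) mod int n"
      by (metis add_diff_cancel_right' mod_diff_left_eq mod_minus_eq)
    ultimately show ?thesis
      using y by (simp add: shift_gamma1 shift_neg_gamma1)
  qed (simp add: shift_other)
qed

lemma bij_betw_shift: "bij_betw (\<lambda>\<sigma>. shift \<sigma> t) (configs n N) (configs n N)"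
proof (rule bij_betwI[where g = "\<lambda>\<sigma>. shift \<sigma> (\<lambda>e. - t e)"])
  fix \<sigma> assume "\<sigma> \<in> configs n N"
  from shift_shift_uminus[OF this, of "\<lambda>e. - t e"]
  show "shift (shift \<sigma> (\<lambda>e. - t e)) t = \<sigma>" by simp
qed (auto simp: shift_in_configs shift_shift_uminus)

lemma dsig_shift_cobd:
  assumes e: "e \<in> S" and p: "p \<in> cobd e"
  shows "dsig n (shift \<sigma> t) p = (dsig n \<sigma> p + t e) mod int n"
proof -
  have e_bd: "e \<in> bd p"
    using p by (simp add: cobd_def)
  have "shift \<sigma> t x mod int n = (\<sigma> x + (if x = e then t e else 0)) mod int n" if "x \<in> bd p" for x
  proof (cases "x = e")
    case False
    then have "x \<notin> \<gamma>" "neg_edge x \<notin> \<gamma>"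
      using gamma1_only_edge_in_cobd[OF e p that] by blast+
    then have "x \<notin> S" "neg_edge x \<notin> S"
      using gamma1_subset_gamma by blast+
    then show ?thesis using False by (simp add: shift_other)
  qed (simp add: e shift_gamma1)
  then have "(\<Sum>x\<in>bd p. shift \<sigma> t x mod int n) mod int n
      = (\<Sum>x\<in>bd p. (\<sigma> x + (if x = e then t e else 0)) mod int n) mod int n"
    by (simp cong: sum.cong)
  then have "(\<Sum>x\<in>bd p. shift \<sigma> t x) mod int n = (\<Sum>x\<in>bd p. \<sigma> x + (if x = e then t e else 0)) mod int n"
    by (simp only: mod_sum_eq)
  also have "\<dots> = ((\<Sum>x\<in>bd p. \<sigma> x) + t e) mod int n"
    using e_bd finite_bd by (simp add: sum.distrib)
  also have "\<dots> = (dsig n \<sigma> p + t e) mod int n"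
    unfolding dsig_def by (simp only: mod_add_left_eq)
  finally show ?thesis
    unfolding dsig_def .
qed

lemma dsig_shift_outside:
  assumes "p \<in> plaqs_Z4" "p \<notin> (\<Union>e\<in>S. ucobd e)"
  shows "dsig n (shift \<sigma> t) p = dsig n \<sigma> p"
proof -
  have "x \<notin> S \<and> neg_edge x \<notin> S" if "x \<in> bd p" for x
  proof -
    have "p \<in> cobd x"
      using assms(1) that by (simp add: cobd_def)
    then have "p \<in> ucobd x" "p \<in> ucobd (neg_edge x)"
      by (simp_all add: ucobd_def)
    then show ?thesis using assms(2) by blast
  qed
  then show ?thesis
    unfolding dsig_def by (simp add: shift_other)
qed

lemma gamma'_shift: "gamma' n (shift \<sigma> t) \<gamma> = gamma' n \<sigma> \<gamma>"
proof -
  have add_mod_cancel: "(a + c) mod m = (b + c) mod m \<longleftrightarrow> a mod m = b mod m" for a b c m :: int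
    by (metis add_diff_cancel_right' mod_add_left_eq mod_diff_left_eq)
  have "dsig n (shift \<sigma> t) p = dsig n (shift \<sigma> t) p' \<longleftrightarrow> dsig n \<sigma> p = dsig n \<sigma> p'"
    if "e \<in> S" "p \<in> cobd e" "p' \<in> cobd e" for e p p'
    unfolding dsig_shift_cobd[OF that(1,2)] dsig_shift_cobd[OF that(1,3)] add_mod_cancel
    by (simp add: dsig_def)
  then show ?thesis
    unfolding gamma'_def by blast
qed

lemma rho_dsig_rev_plaq:
  assumes \<sigma>: "\<sigma> \<in> configs n N" and p: "p \<in> plaqs N"
  shows "\<rho> (dsig n \<sigma> (rev_plaq p)) = \<rho> (- dsig n \<sigma> p)"
proof -
  have "\<rho> (dsig n \<sigma> (rev_plaq p)) = (\<Prod>x\<in>bd p. \<rho> (\<sigma> (neg_edge x)))"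
    unfolding dsig_def bd_rev_plaq faithful_rep_mod[OF rep] faithful_rep_sum[OF rep]
    by (simp add: prod.reindex inj_on_subset[OF inj_neg_edge])
  also have "\<dots> = (\<Prod>x\<in>bd p. \<rho> (- \<sigma> x))"
  proof (rule prod.cong[OF refl])
    fix x assume "x \<in> bd p"
    then have "\<sigma> (neg_edge x) = (- \<sigma> x) mod int n"
      using bd_subset_edges[OF p] configs_neg_edge[OF \<sigma>] by blast
    then show "\<rho> (\<sigma> (neg_edge x)) = \<rho> (- \<sigma> x)"
      by (simp add: faithful_rep_mod[OF rep])
  qed
  also have "\<dots> = \<rho> (- dsig n \<sigma> p)"
    unfolding faithful_rep_sum[OF rep, symmetric] dsig_def
    by (rule faithful_rep_cong[OF rep]) (simp add: sum_negf mod_minus_eq)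
  finally show ?thesis .
qed

lemma sum_plaqs_shift:
  assumes \<sigma>: "\<sigma> \<in> configs n N"
  shows "(\<Sum>p\<in>plaqs N. \<rho> (dsig n (shift \<sigma> t) p))
       = (\<Sum>p\<in>plaqs N - (\<Union>e\<in>S. ucobd e). \<rho> (dsig n \<sigma> p))
         + (\<Sum>e\<in>S. \<Sum>p\<in>cobd e. \<rho> (dsig n \<sigma> p + t e) + \<rho> (- (dsig n \<sigma> p + t e)))"
proof -
  let ?f = "\<lambda>p. \<rho> (dsig n (shift \<sigma> t) p)"
  have "sum ?f (plaqs N) = sum ?f (plaqs N - (\<Union>e\<in>S. ucobd e)) + (\<Sum>e\<in>S. sum ?f (ucobd e))"
    by (rule sum_split_disjoint_family[OF finite_plaqs finite_gamma1])
      (use ucobd_subset_plaqs gamma1_subset_gamma ucobd_disjoint in blast)+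
  moreover have "sum ?f (plaqs N - (\<Union>e\<in>S. ucobd e)) = (\<Sum>p\<in>plaqs N - (\<Union>e\<in>S. ucobd e). \<rho> (dsig n \<sigma> p))"
  proof (rule sum.cong[OF refl])
    fix p assume "p \<in> plaqs N - (\<Union>e\<in>S. ucobd e)"
    then show "?f p = \<rho> (dsig n \<sigma> p)"
      using plaqs_subset_plaqs_Z4 dsig_shift_outside by (metis DiffE subsetD)
  qed
  moreover have "sum ?f (ucobd e) = (\<Sum>p\<in>cobd e. \<rho> (dsig n \<sigma> p + t e) + \<rho> (- (dsig n \<sigma> p + t e)))"
    if e: "e \<in> S" for e
  proof -
    have "sum ?f (ucobd e) = sum ?f (cobd e) + sum ?f (rev_plaq ` cobd e)"
      unfolding ucobd_def cobd_neg_edge[symmetric]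
      by (rule sum.union_disjoint[OF finite_cobd finite_cobd cobd_disjoint_cobd_neg_edge])
    also have "\<dots> = (\<Sum>p\<in>cobd e. ?f p + ?f (rev_plaq p))"
      by (simp add: sum.reindex inj_on_subset[OF inj_rev_plaq] sum.distrib)
    also have "\<dots> = (\<Sum>p\<in>cobd e. \<rho> (dsig n \<sigma> p + t e) + \<rho> (- (dsig n \<sigma> p + t e)))"
    proof (rule sum.cong[OF refl])
      fix p assume p: "p \<in> cobd e"
      then have "p \<in> plaqs N"
        using cobd_subset_plaqs e gamma1_subset_gamma by blast
      then have "?f (rev_plaq p) = \<rho> (- ((dsig n \<sigma> p + t e) mod int n))"
        using rho_dsig_rev_plaq[OF shift_in_configs[OF \<sigma>]] dsig_shift_cobd[OF e p] by simp
      also have "\<dots> = \<rho> (- (dsig n \<sigma> p + t e))"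
        by (rule faithful_rep_cong[OF rep]) (simp add: mod_minus_eq)
      finally show "?f p + ?f (rev_plaq p) = \<rho> (dsig n \<sigma> p + t e) + \<rho> (- (dsig n \<sigma> p + t e))"
        by (simp add: dsig_shift_cobd[OF e p] faithful_rep_mod[OF rep])
    qed
    finally show ?thesis .
  qed
  ultimately show ?thesis by simp
qed

lemma sum_edges_shift:
  assumes \<sigma>: "\<sigma> \<in> configs n N"
  shows "(\<Sum>x\<in>edges N. \<rho> (shift \<sigma> t x))
       = (\<Sum>x\<in>edges N - (\<Union>e\<in>S. {e, neg_edge e}). \<rho> (\<sigma> x))
         + (\<Sum>e\<in>S. \<rho> (\<sigma> e + t e) + \<rho> (- (\<sigma> e + t e)))"
proof -
  let ?f = "\<lambda>x. \<rho> (shift \<sigma> t x)"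
  have "sum ?f (edges N) = sum ?f (edges N - (\<Union>e\<in>S. {e, neg_edge e})) + (\<Sum>e\<in>S. sum ?f {e, neg_edge e})"
    by (rule sum_split_disjoint_family[OF finite_edges finite_gamma1])
      (use gamma1_subset_edges neg_edge_in_edges edge_pairs_disjoint in blast)+
  moreover have "sum ?f (edges N - (\<Union>e\<in>S. {e, neg_edge e})) = (\<Sum>x\<in>edges N - (\<Union>e\<in>S. {e, neg_edge e}). \<rho> (\<sigma> x))"
  proof (rule sum.cong[OF refl])
    fix x assume "x \<in> edges N - (\<Union>e\<in>S. {e, neg_edge e})"
    then have "x \<notin> S" "neg_edge x \<notin> S"
      by auto
    then show "?f x = \<rho> (\<sigma> x)" by (simp add: shift_other)
  qed
  moreover have "sum ?f {e, neg_edge e} = \<rho> (\<sigma> e + t e) + \<rho> (- (\<sigma> e + t e))" if "e \<in> S" for e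
    using that neg_edge_neq_gamma1[OF that]
    by (simp add: shift_gamma1 shift_neg_gamma1 faithful_rep_mod[OF rep] del: neg_edge_Pair)
  ultimately show ?thesis by simp
qed

(* Each plaquette containing e lies in P_N together with its reversal, whose variable is the
   negative one; hence the pairs rho x + rho (- x). *)
definition rest_weight :: "real \<Rightarrow> real \<Rightarrow> (edge \<Rightarrow> int) \<Rightarrow> complex" where
  "rest_weight \<beta> \<kappa> \<sigma> = exp (of_real \<beta> * (\<Sum>p\<in>plaqs N - (\<Union>e\<in>S. ucobd e). \<rho> (dsig n \<sigma> p))
      + of_real \<kappa> * (\<Sum>x\<in>edges N - (\<Union>e\<in>S. {e, neg_edge e}). \<rho> (\<sigma> x)))"

definition edge_weight :: "real \<Rightarrow> real \<Rightarrow> (edge \<Rightarrow> int) \<Rightarrow> edge \<Rightarrow> int \<Rightarrow> complex" where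
  "edge_weight \<beta> \<kappa> \<sigma> e g = exp (of_real \<beta> * (\<Sum>p\<in>cobd e. \<rho> (dsig n \<sigma> p + g) + \<rho> (- (dsig n \<sigma> p + g)))
      + of_real \<kappa> * (\<rho> (\<sigma> e + g) + \<rho> (- (\<sigma> e + g))))"

lemma weight_shift:
  assumes "\<sigma> \<in> configs n N"
  shows "weight n \<rho> N \<beta> \<kappa> (shift \<sigma> t) = rest_weight \<beta> \<kappa> \<sigma> * (\<Prod>e\<in>S. edge_weight \<beta> \<kappa> \<sigma> e (t e))"
proof -
  have "of_real \<beta> * (A + sum Y S) + of_real \<kappa> * (B + sum Z S)
      = (of_real \<beta> * A + of_real \<kappa> * B) + (\<Sum>e\<in>S. of_real \<beta> * Y e + of_real \<kappa> * Z e)"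
    for A B :: complex and Y Z :: "edge \<Rightarrow> complex"
    by (simp add: algebra_simps sum.distrib sum_distrib_left)
  then show ?thesis
    unfolding weight_def sum_plaqs_shift[OF assms] sum_edges_shift[OF assms]
    by (simp add: exp_add exp_sum finite_gamma1 rest_weight_def edge_weight_def)
qed

lemma edge_weight_eq_theta_weight:
  assumes e: "e \<in> S" and p: "p \<in> cobd e" and flat: "e \<notin> gamma' n \<sigma> \<gamma>"
  shows "edge_weight \<beta> \<kappa> \<sigma> e g
       = of_real (theta_weight \<rho> \<beta> \<kappa> (\<sigma> e - dsig n \<sigma> p) (dsig n \<sigma> p + g))"
proof -
  have plaquettes: "(\<Sum>q\<in>cobd e. \<rho> (dsig n \<sigma> q + g) + \<rho> (- (dsig n \<sigma> q + g)))
      = of_real (12 * Re (\<rho> (dsig n \<sigma> p + g)))"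
  proof -
    have "dsig n \<sigma> q = dsig n \<sigma> p" if "q \<in> cobd e" for q
      using e p flat that unfolding gamma'_def by blast
    then have "(\<Sum>q\<in>cobd e. \<rho> (dsig n \<sigma> q + g) + \<rho> (- (dsig n \<sigma> q + g)))
        = (\<Sum>q\<in>cobd e. of_real (2 * Re (\<rho> (dsig n \<sigma> p + g))))"
      by (simp only: faithful_rep_add_uminus[OF rep] cong: sum.cong)
    also have "\<dots> = of_real (12 * Re (\<rho> (dsig n \<sigma> p + g)))"
      by (simp add: card_cobd)
    finally show ?thesis .
  qed
  have edge: "\<rho> (\<sigma> e + g) + \<rho> (- (\<sigma> e + g))
      = of_real (2 * Re (\<rho> (dsig n \<sigma> p + g + (\<sigma> e - dsig n \<sigma> p))))"
    by (simp only: faithful_rep_add_uminus[OF rep]) (simp add: algebra_simps)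
  show ?thesis
    using plaquettes edge
    by (simp add: edge_weight_def theta_weight_def mult_ac flip: exp_of_real)
qed

lemma sum_rho_edge_weight:
  assumes e: "e \<in> S" and p: "p \<in> cobd e" and flat: "e \<notin> gamma' n \<sigma> \<gamma>"
  shows "(\<Sum>g\<in>{0..<int n}. \<rho> (dsig n \<sigma> p + g) * edge_weight \<beta> \<kappa> \<sigma> e g)
       = theta n \<rho> \<beta> \<kappa> (\<sigma> e - dsig n \<sigma> p) * (\<Sum>g\<in>{0..<int n}. edge_weight \<beta> \<kappa> \<sigma> e g)"
proof -
  define b where "b = dsig n \<sigma> p"
  let ?w = "theta_weight \<rho> \<beta> \<kappa> (\<sigma> e - b)"
  have n: "0 < int n" using n_pos by simp
  have "(\<Sum>g\<in>{0..<int n}. \<rho> (b + g) * edge_weight \<beta> \<kappa> \<sigma> e g)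
      = (\<Sum>g\<in>{0..<int n}. \<rho> (b + g) * of_real (?w (b + g)))"
    by (simp add: edge_weight_eq_theta_weight[OF assms] b_def)
  also have "\<dots> = (\<Sum>g\<in>{0..<int n}. \<rho> g * of_real (?w g))"
    by (rule sum_mod_shift[OF n]) (simp add: faithful_rep_mod[OF rep] theta_weight_mod[OF rep])
  also have "\<dots> = theta n \<rho> \<beta> \<kappa> (\<sigma> e - b) * of_real (\<Sum>g\<in>{0..<int n}. ?w g)"
    by (rule theta_mult_sum_theta_weight[OF n_pos, symmetric])
  also have "(\<Sum>g\<in>{0..<int n}. ?w g) = (\<Sum>g\<in>{0..<int n}. ?w (b + g))"
    by (rule sum_mod_shift[OF n, symmetric]) (rule theta_weight_mod[OF rep])
  also have "of_real \<dots> = (\<Sum>g\<in>{0..<int n}. edge_weight \<beta> \<kappa> \<sigma> e g)"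
    by (simp add: edge_weight_eq_theta_weight[OF assms] b_def)
  finally show ?thesis
    unfolding b_def .
qed

lemma rho_sum_dsig_shift:
  assumes pe: "\<forall>e\<in>S. pe e \<in> cobd e"
  shows "\<rho> (\<Sum>e\<in>S - gamma' n (shift \<sigma> t) \<gamma>. dsig n (shift \<sigma> t) (pe e))
       = (\<Prod>e\<in>S. if e \<in> gamma' n \<sigma> \<gamma> then 1 else \<rho> (dsig n \<sigma> (pe e) + t e))"
proof -
  have "\<rho> (dsig n (shift \<sigma> t) (pe e)) = \<rho> (dsig n \<sigma> (pe e) + t e)" if "e \<in> S" for e
    using dsig_shift_cobd[OF that] pe that by (simp add: faithful_rep_mod[OF rep])
  then show ?thesis
    unfolding gamma'_shift faithful_rep_sum[OF rep]
    by (simp add: prod.If_cases[OF finite_gamma1] Diff_eq)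
qed

lemma prod_theta_shift:
  assumes pe: "\<forall>e\<in>S. pe e \<in> cobd e"
  shows "(\<Prod>e\<in>S - gamma' n (shift \<sigma> t) \<gamma>. theta n \<rho> \<beta> \<kappa> (shift \<sigma> t e - dsig n (shift \<sigma> t) (pe e)))
       = (\<Prod>e\<in>S. if e \<in> gamma' n \<sigma> \<gamma> then 1 else theta n \<rho> \<beta> \<kappa> (\<sigma> e - dsig n \<sigma> (pe e)))"
proof -
  have "theta n \<rho> \<beta> \<kappa> (shift \<sigma> t e - dsig n (shift \<sigma> t) (pe e)) = theta n \<rho> \<beta> \<kappa> (\<sigma> e - dsig n \<sigma> (pe e))"
    if "e \<in> S" for e
  proof (rule theta_cong[OF rep])
    show "(shift \<sigma> t e - dsig n (shift \<sigma> t) (pe e)) mod int n = (\<sigma> e - dsig n \<sigma> (pe e)) mod int n"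
      unfolding shift_gamma1[OF that] dsig_shift_cobd[OF that pe[rule_format, OF that]]
      by (simp only: mod_diff_eq) simp
  qed
  then show ?thesis
    unfolding gamma'_shift
    by (simp add: prod.If_cases[OF finite_gamma1] Diff_eq)
qed

lemma sum_shifts_observables_eq:
  assumes \<sigma>: "\<sigma> \<in> configs n N" and pe: "\<forall>e\<in>S. pe e \<in> cobd e"
  shows "(\<Sum>t\<in>PiE S (\<lambda>_. {0..<int n}).
            \<rho> (\<Sum>e\<in>S - gamma' n (shift \<sigma> t) \<gamma>. dsig n (shift \<sigma> t) (pe e)) * weight n \<rho> N \<beta> \<kappa> (shift \<sigma> t))
       = (\<Sum>t\<in>PiE S (\<lambda>_. {0..<int n}).
            (\<Prod>e\<in>S - gamma' n (shift \<sigma> t) \<gamma>. theta n \<rho> \<beta> \<kappa> (shift \<sigma> t e - dsig n (shift \<sigma> t) (pe e)))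
            * weight n \<rho> N \<beta> \<kappa> (shift \<sigma> t))"
proof -
  let ?G = "gamma' n \<sigma> \<gamma>"
  let ?w = "edge_weight \<beta> \<kappa> \<sigma>"
  let ?f1 = "\<lambda>e g. if e \<in> ?G then 1 else \<rho> (dsig n \<sigma> (pe e) + g)"
  let ?f2 = "\<lambda>e g. if e \<in> ?G then 1 else theta n \<rho> \<beta> \<kappa> (\<sigma> e - dsig n \<sigma> (pe e))"
  have factor: "(\<Sum>g\<in>{0..<int n}. ?f1 e g * ?w e g) = (\<Sum>g\<in>{0..<int n}. ?f2 e g * ?w e g)"
    if "e \<in> S" for e
    using sum_rho_edge_weight[OF that pe[rule_format, OF that]]
    by (simp add: sum_distrib_left)
  have "(\<Sum>t\<in>PiE S (\<lambda>_. {0..<int n}).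
            \<rho> (\<Sum>e\<in>S - gamma' n (shift \<sigma> t) \<gamma>. dsig n (shift \<sigma> t) (pe e)) * weight n \<rho> N \<beta> \<kappa> (shift \<sigma> t))
      = rest_weight \<beta> \<kappa> \<sigma> * (\<Prod>e\<in>S. \<Sum>g\<in>{0..<int n}. ?f1 e g * ?w e g)"
    unfolding rho_sum_dsig_shift[OF pe] weight_shift[OF \<sigma>]
    by (rule sum_PiE_mult_prod[OF finite_gamma1, where f = ?f1]) simp
  also have "\<dots> = rest_weight \<beta> \<kappa> \<sigma> * (\<Prod>e\<in>S. \<Sum>g\<in>{0..<int n}. ?f2 e g * ?w e g)"
    using factor by (simp cong: prod.cong)
  also have "\<dots> = (\<Sum>t\<in>PiE S (\<lambda>_. {0..<int n}).
            (\<Prod>e\<in>S - gamma' n (shift \<sigma> t) \<gamma>. theta n \<rho> \<beta> \<kappa> (shift \<sigma> t e - dsig n (shift \<sigma> t) (pe e)))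
            * weight n \<rho> N \<beta> \<kappa> (shift \<sigma> t))"
    unfolding prod_theta_shift[OF pe] weight_shift[OF \<sigma>]
    by (rule sum_PiE_mult_prod[OF finite_gamma1, where f = ?f2, symmetric]) simp
  finally show ?thesis .
qed

lemma expect_rho_sum_eq_expect_prod_theta:
  assumes pe: "\<forall>e\<in>S. pe e \<in> cobd e"
  shows "expect n \<rho> N \<beta> \<kappa> (\<lambda>\<sigma>. \<rho> (\<Sum>e\<in>S - gamma' n \<sigma> \<gamma>. dsig n \<sigma> (pe e)))
       = expect n \<rho> N \<beta> \<kappa> (\<lambda>\<sigma>. \<Prod>e\<in>S - gamma' n \<sigma> \<gamma>. theta n \<rho> \<beta> \<kappa> (\<sigma> e - dsig n \<sigma> (pe e)))"
proof -
  let ?w = "weight n \<rho> N \<beta> \<kappa>"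
  let ?F1 = "\<lambda>\<sigma>. \<rho> (\<Sum>e\<in>S - gamma' n \<sigma> \<gamma>. dsig n \<sigma> (pe e)) * ?w \<sigma>"
  let ?F2 = "\<lambda>\<sigma>. (\<Prod>e\<in>S - gamma' n \<sigma> \<gamma>. theta n \<rho> \<beta> \<kappa> (\<sigma> e - dsig n \<sigma> (pe e))) * ?w \<sigma>"
  have "finite (PiE S (\<lambda>_. {0..<int n}))"
    by (simp add: finite_PiE finite_gamma1)
  moreover have "PiE S (\<lambda>_. {0..<int n}) \<noteq> {}"
    using n_pos by (simp add: PiE_eq_empty_iff)
  ultimately have "sum ?F1 (configs n N) = sum ?F2 (configs n N)"
    by (rule sum_eq_by_averaging[where \<phi> = "\<lambda>t \<sigma>. shift \<sigma> t"])
      (simp_all only: bij_betw_shift sum_shifts_observables_eq[OF _ pe])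
  then show ?thesis
    unfolding expect_def by simp
qed

end

theorem mainTheorem18:
  fixes n N :: nat and \<rho> :: "int \<Rightarrow> complex" and \<beta> \<kappa> :: real
    and \<gamma> :: "edge set" and pe :: "edge \<Rightarrow> plaq"
  assumes "0 < n" and "faithful_rep n \<rho>"
    and "\<beta> \<ge> 0" and "\<kappa> \<ge> 0"
    and "simple_loop \<gamma>" and "\<gamma> \<subseteq> edges N"
    and "bd_cobd \<gamma> \<subseteq> edges N"
    and "\<forall>e\<in>gamma1 \<gamma>. pe e \<in> cobd e"
  shows "expect n \<rho> N \<beta> \<kappa>
           (\<lambda>\<sigma>. \<rho> (\<Sum>e\<in>gamma1 \<gamma> - gamma' n \<sigma> \<gamma>. dsig n \<sigma> (pe e)))
       = expect n \<rho> N \<beta> \<kappa>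
           (\<lambda>\<sigma>. \<Prod>e\<in>gamma1 \<gamma> - gamma' n \<sigma> \<gamma>. theta n \<rho> \<beta> \<kappa> (\<sigma> e - dsig n \<sigma> (pe e)))"
proof -
  have "finite \<gamma>" and "\<And>e. e \<in> \<gamma> \<Longrightarrow> neg_edge e \<notin> \<gamma>"
    using \<open>simple_loop \<gamma>\<close> unfolding simple_loop_def by auto
  then interpret loop_in_box n N \<rho> \<gamma>
    using assms by unfold_locales auto
  show ?thesis
    using expect_rho_sum_eq_expect_prod_theta \<open>\<forall>e\<in>gamma1 \<gamma>. pe e \<in> cobd e\<close> .
qed

end
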